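(* Let $E$ be a uniformly random simple $d$-regular graph on $\{1,\dots,N\}$ (identified with its edge set), and, conditionally on $E$, let $(\mathbf S,\mathbf s)=((S_1,\dots,S_d),(s_1,\dots,s_d))$ be uniform over $\mathcal S_1(E)\times\cdots\times\mathcal S_d(E)\times\{1,\dots,8\}^d$. Then $T_{\mathbf S,\mathbf s}(E)$ is a uniformly random simple $d$-regular graph.
   Context: For a set $S$ of edges, $[S]=\bigcup_{e\in S}e$ is its vertex set; for $B\subset\{1,\dots,N\}$, $E|_B=\{e\in E: e\subset B\}$. For each simple $d$-regular $E$, fix an enumeration $e_1(E),\dots,e_d(E)$ of the edges of $E$ incident to vertex $1$, and let $\mathcal S_\mu(E)$ be the set of subsets $S\subset E$ with $|S|=3$, $e_\mu(E)\in S$, and no edge of $S\setminus\{e_\mu(E)\}$ incident to $1$. For $S\subset E$ with $|S|=3$ let $I(E,S)=\mathbf 1\{|[S]|=6,\ E|_{[S]}=S\}$. For a 3-edge set $S$ with $|[S]|=6$, there are eight perfect matchings $S'$ of $[S]$ with $S\cap S'=\emptyset$; fix an enumeration $S'_1,\dots,S'_8$ of them and set $T_{S,s}(E)=(E\setminus S)\cup S'_s$. Given $(\mathbf S,\mathbf s)$ with $S_\mu\in\mathcal S_\mu(E)$, define $I_\mu=I(E,S_\mu)$, $J_\mu=\mathbf 1\{[S_\mu]\cap[S_\nu]=\{1\}\text{ for all }\nu\neq\mu\}$, $W=\{\mu\in\{1,\dots,d\}: I_\mu J_\mu=1\}$, and $T_{\mathbf S,\mathbf s}(E)=(T_{S_{\mu_1},s_{\mu_1}}\circ\cdots\circ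 T_{S_{\mu_k},s_{\mu_k}})(E)$ where $\mu_1,\dots,\mu_k$ enumerates $W$ (this does not depend on the order; equivalently, each $S_\mu$ with $\mu\in W$ is replaced by the corresponding matching $S'_{s_\mu}$ of $[S_\mu]$). *)

theory Defs
  imports "HOL-Probability.Probability"
begin

definition simple_regular :: "nat \<Rightarrow> nat \<Rightarrow> nat set set \<Rightarrow> bool" where
  "simple_regular N d E \<longleftrightarrow>
     E \<subseteq> {e. e \<subseteq> {1..N} \<and> card e = 2} \<and> (\<forall>v\<in>{1..N}. card {e\<in>E. v \<in> e} = d)"

definition RG :: "nat \<Rightarrow> nat \<Rightarrow> nat set set set" where
  "RG N d = {E. simple_regular N d E}"

definition restr :: "nat set set \<Rightarrow> nat set \<Rightarrow> nat set set" where
  "restr E B = {e\<in>E. e \<subseteq> B}"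

text \<open>S_mu(E), with enum E mu playing the role of e_mu(E).\<close>
definition Ssets :: "(nat set set \<Rightarrow> nat \<Rightarrow> nat set) \<Rightarrow> nat set set \<Rightarrow> nat \<Rightarrow> nat set set set" where
  "Ssets enum E \<mu> = {S. S \<subseteq> E \<and> card S = 3 \<and> enum E \<mu> \<in> S \<and> (\<forall>e\<in>S - {enum E \<mu>}. (1::nat) \<notin> e)}"

definition Iind :: "nat set set \<Rightarrow> nat set set \<Rightarrow> bool" where
  "Iind E S \<longleftrightarrow> card (\<Union>S) = 6 \<and> restr E (\<Union>S) = S"

definition Jind :: "nat \<Rightarrow> (nat \<Rightarrow> nat set set) \<Rightarrow> nat \<Rightarrow> bool" where
  "Jind d Sf \<mu> \<longleftrightarrow> (\<forall>\<nu>\<in>{1..d}. \<nu> \<noteq> \<mu> \<longrightarrow> \<Union>(Sf \<mu>) \<inter> \<Union>(Sf \<nu>) = {1})"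

definition perfect_matching :: "nat set \<Rightarrow> nat set set \<Rightarrow> bool" where
  "perfect_matching V M \<longleftrightarrow> (\<forall>e\<in>M. card e = 2 \<and> e \<subseteq> V) \<and> (\<forall>v\<in>V. \<exists>!e. e \<in> M \<and> v \<in> e)"

text \<open>Sample space for (S, s): omega mu = (S_mu, s_mu).\<close>
definition Omega :: "(nat set set \<Rightarrow> nat \<Rightarrow> nat set) \<Rightarrow> nat \<Rightarrow> nat set set
                     \<Rightarrow> (nat \<Rightarrow> nat set set \<times> nat) set" where
  "Omega enum d E = PiE {1..d} (\<lambda>\<mu>. Ssets enum E \<mu> \<times> {1..8})"

definition Wset :: "nat \<Rightarrow> nat set set \<Rightarrow> (nat \<Rightarrow> nat set set \<times> nat) \<Rightarrow> nat set" where
  "Wset d E \<omega> = {\<mu>\<in>{1..d}. Iind E (fst (\<omega> \<mu>)) \<and> Jind d (\<lambda>\<nu>. fst (\<omega> \<nu>)) \<mu>}"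

definition switch :: "nat \<Rightarrow> (nat set set \<Rightarrow> nat \<Rightarrow> nat set set) \<Rightarrow> nat set set
                      \<Rightarrow> (nat \<Rightarrow> nat set set \<times> nat) \<Rightarrow> nat set set" where
  "switch d mt E \<omega> =
     (E - (\<Union>\<mu>\<in>Wset d E \<omega>. fst (\<omega> \<mu>))) \<union> (\<Union>\<mu>\<in>Wset d E \<omega>. mt (fst (\<omega> \<mu>)) (snd (\<omega> \<mu>)))"

end

theory Submission
  imports Defs
begin

text \<open>A switch can be undone. Every switched block spans six vertices, induces exactly its three
  edges and meets the other blocks only in vertex 1; after the switch the same blocks have these
  properties, now spanned by the new matchings. So from the switched graph, the new matchings
  (reindexed by the enumeration of the new edges at vertex 1) and the indices of the old matchings
  among the matchings disjoint from the new ones, the switch recovers the original graph and choice.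
  Thus the switch is an involution of the set of pairs (graph, choice). Since every graph admits
  the same number of choices, the pair is uniform on that set, hence so is its image, and the first
  component of the image, the switched graph, is uniform.\<close>

section \<open>Moves lifting to bijections preserve the uniform distribution\<close>

lemma pmf_of_set_Sigma_eq_bind:
  assumes "finite A" "A \<noteq> {}"
    and "\<And>x. x \<in> A \<Longrightarrow> finite (B x) \<and> B x \<noteq> {} \<and> card (B x) = n"
  shows "pmf_of_set (Sigma A B) = bind_pmf (pmf_of_set A) (\<lambda>x. map_pmf (Pair x) (pmf_of_set (B x)))"
proof -
  have "Sigma A B = (\<Union>x\<in>A. {x} \<times> B x)" by blast
  also have "pmf_of_set \<dots> = bind_pmf (pmf_of_set A) (\<lambda>x. pmf_of_set ({x} \<times> B x))"
    using assms by (intro pmf_of_set_UN) (auto simp: disjoint_family_on_def card_cartesian_product)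
  also have "\<dots> = bind_pmf (pmf_of_set A) (\<lambda>x. map_pmf (Pair x) (pmf_of_set (B x)))"
  proof (intro bind_pmf_cong refl)
    fix x assume "x \<in> set_pmf (pmf_of_set A)"
    hence "finite (B x)" "B x \<noteq> {}" using assms by auto
    hence "map_pmf (Pair x) (pmf_of_set (B x)) = pmf_of_set (Pair x ` B x)"
      by (intro map_pmf_of_set_inj) (auto simp: inj_on_def)
    moreover have "Pair x ` B x = {x} \<times> B x" by blast
    ultimately show "pmf_of_set ({x} \<times> B x) = map_pmf (Pair x) (pmf_of_set (B x))" by simp
  qed
  finally show ?thesis .
qed

lemma bind_pmf_of_set_stationary:
  assumes A: "finite A" "A \<noteq> {}"
    and B: "\<And>x. x \<in> A \<Longrightarrow> finite (B x) \<and> B x \<noteq> {} \<and> card (B x) = n"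
    and bij: "bij_betw \<phi> (Sigma A B) (Sigma A B)"
    and f: "\<And>x y. x \<in> A \<Longrightarrow> y \<in> B x \<Longrightarrow> f x y = fst (\<phi> (x, y))"
  shows "bind_pmf (pmf_of_set A) (\<lambda>x. map_pmf (f x) (pmf_of_set (B x))) = pmf_of_set A"
proof -
  let ?P = "pmf_of_set (Sigma A B)"
  have P: "?P = bind_pmf (pmf_of_set A) (\<lambda>x. map_pmf (Pair x) (pmf_of_set (B x)))"
    using A B by (rule pmf_of_set_Sigma_eq_bind)
  have "finite (Sigma A B)" "Sigma A B \<noteq> {}" using A B by auto
  hence \<phi>_uniform: "map_pmf \<phi> ?P = ?P" using bij by (intro map_pmf_of_set_bij_betw)
  have "bind_pmf (pmf_of_set A) (\<lambda>x. map_pmf (f x) (pmf_of_set (B x))) = map_pmf (fst \<circ> \<phi>) ?P"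
    unfolding P map_bind_pmf map_pmf_comp using A B
    by (intro bind_pmf_cong refl map_pmf_cong) (auto simp: f)
  also have "\<dots> = map_pmf fst ?P" by (simp add: map_pmf_compose \<phi>_uniform)
  also have "\<dots> = pmf_of_set A"
    unfolding P map_bind_pmf map_pmf_comp by (simp add: map_pmf_const bind_return_pmf')
  finally show ?thesis .
qed

section \<open>Three edges spanning six vertices\<close>

lemma three_edges_disjoint:
  assumes "card S = 3" "\<forall>e\<in>S. card e = 2" "card (\<Union>S) = 6"
    and "a \<in> S" "b \<in> S" "a \<noteq> b"
  shows "a \<inter> b = {}"
proof (rule ccontr)
  assume meet: "a \<inter> b \<noteq> {}"
  obtain c where S: "S = {a, b, c}" using assms(1,4,5,6) unfolding card_3_iff by blast
  have fin: "finite a" "finite b" using assms(2) S by (metis card.infinite insertCI zero_neq_numeral)+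
  have "card (a \<union> b) + card (a \<inter> b) = card a + card b" using fin card_Un_Int by metis
  moreover have "card (a \<inter> b) \<ge> 1" using meet fin by (simp add: Suc_leI card_gt_0_iff)
  ultimately have "card (a \<union> b) \<le> 3" using assms(2) S by auto
  moreover have "card (a \<union> b \<union> c) \<le> card (a \<union> b) + card c" by (rule card_Un_le)
  moreover have "\<Union>S = a \<union> b \<union> c" using S by auto
  ultimately have "card (\<Union>S) \<le> 5" using assms(2) S by auto
  thus False using assms(3) by simp
qed

lemma perfect_matching_self:
  assumes "card S = 3" "\<forall>e\<in>S. card e = 2" "card (\<Union>S) = 6"
  shows "perfect_matching (\<Union>S) S"
  unfolding perfect_matching_def
proof (intro conjI ballI)
  fix v assume "v \<in> \<Union>S"
  then obtain e where e: "e \<in> S" "v \<in> e" by blast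
  moreover have "f = e" if "f \<in> S" "v \<in> f" for f
    using three_edges_disjoint[OF assms that(1) e(1)] that e by blast
  ultimately show "\<exists>!e. e \<in> S \<and> v \<in> e" by blast
qed (use assms(2) in blast)+

lemma perfect_matching_unique:
  assumes "perfect_matching V M" "e \<in> M" "f \<in> M" "v \<in> e" "v \<in> f"
  shows "e = f"
  using assms unfolding perfect_matching_def by blast

lemma perfect_matching_Union:
  assumes "perfect_matching V M"
  shows "\<Union>M = V"
  using assms unfolding perfect_matching_def by blast

lemma perfect_matching_card:
  assumes "perfect_matching V M" "finite V"
  shows "card V = 2 * card M"
proof -
  have fin: "\<And>e. e \<in> M \<Longrightarrow> finite e"
    using assms unfolding perfect_matching_def by (meson finite_subset)
  have "disjoint M"
    unfolding disjoint_def using perfect_matching_unique[OF assms(1)] by blast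
  hence "card (\<Union>M) = sum card M" using fin by (rule card_Union_disjoint)
  also have "\<dots> = sum (\<lambda>_. 2) M"
    using assms(1) unfolding perfect_matching_def by (intro sum.cong) auto
  finally show ?thesis using perfect_matching_Union[OF assms(1)] by simp
qed

section \<open>Counting the choices\<close>

lemma sum_degrees_eq_twice_card:
  assumes "finite E" "finite V" "\<forall>e\<in>E. e \<subseteq> V \<and> card e = 2"
  shows "(\<Sum>v\<in>V. card {e\<in>E. v \<in> e}) = 2 * card E"
proof -
  have "(\<Sum>v\<in>V. card {e\<in>E. v \<in> e}) = (\<Sum>v\<in>V. \<Sum>e\<in>E. if v \<in> e then 1 else 0)"
    using assms(1) by (simp add: sum.If_cases Int_def)
  also have "\<dots> = (\<Sum>e\<in>E. \<Sum>v\<in>V. if v \<in> e then 1 else 0)" by (rule sum.swap)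
  also have "\<dots> = (\<Sum>e\<in>E. card e)"
  proof (rule sum.cong)
    fix e assume "e \<in> E"
    hence "V \<inter> e = e" using assms(3) by blast
    thus "(\<Sum>v\<in>V. if v \<in> e then 1 else 0) = card e" using assms(2) by (simp add: sum.If_cases)
  qed simp
  finally show ?thesis using assms(3) by simp
qed

locale switching =
  fixes N d :: nat
    and enum :: "nat set set \<Rightarrow> nat \<Rightarrow> nat set"
    and mt :: "nat set set \<Rightarrow> nat \<Rightarrow> nat set set"
  assumes enum_bij: "\<forall>E\<in>RG N d. bij_betw (enum E) {1..d} {e\<in>E. (1::nat) \<in> e}"
    and mt_bij: "\<forall>S::nat set set. card S = 3 \<and> (\<forall>e\<in>S. card e = 2) \<and> card (\<Union>S) = 6 \<longrightarrow>
                   bij_betw (mt S) {1..8} {M. perfect_matching (\<Union>S) M \<and> S \<inter> M = {}}"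
begin

lemma finite_RG: "finite (RG N d)"
proof (rule finite_subset)
  show "RG N d \<subseteq> Pow (Pow {1..N})" unfolding RG_def simple_regular_def by blast
qed simp

lemma finite_RG_edges:
  assumes "E \<in> RG N d"
  shows "finite E"
proof (rule finite_subset)
  show "E \<subseteq> Pow {1..N}" using assms unfolding RG_def simple_regular_def by blast
qed simp

lemma card_RG_edges:
  assumes "E \<in> RG N d"
  shows "card E = N * d div 2"
proof -
  have edges: "\<forall>e\<in>E. e \<subseteq> {1..N} \<and> card e = 2" and degrees: "\<forall>v\<in>{1..N}. card {e\<in>E. v \<in> e} = d"
    using assms unfolding RG_def simple_regular_def by blast+
  have "N * d = 2 * card E"
    using sum_degrees_eq_twice_card[OF finite_RG_edges[OF assms] _ edges] degrees by simp
  thus ?thesis by simp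
qed

text \<open>An element of \<open>Ssets enum E \<mu>\<close> is \<open>enum E \<mu>\<close> together with two of the edges avoiding vertex 1.\<close>
lemma card_Ssets:
  assumes E: "E \<in> RG N d" and \<mu>: "\<mu> \<in> {1..d}"
  shows "card (Ssets enum E \<mu>) = (N * d div 2 - d) choose 2"
proof -
  let ?e = "enum E \<mu>"
  let ?away = "{e\<in>E. (1::nat) \<notin> e}"
  have at_one: "bij_betw (enum E) {1..d} {e\<in>E. (1::nat) \<in> e}" using enum_bij E by blast
  hence e: "?e \<in> E" "1 \<in> ?e" using \<mu> by (auto dest: bij_betwE)
  have fin: "finite E" using finite_RG_edges[OF E] .
  have "?away = E - {e\<in>E. 1 \<in> e}" by blast
  hence card_away: "card ?away = N * d div 2 - d"
    using fin bij_betw_same_card[OF at_one] card_RG_edges[OF E] by (simp add: card_Diff_subset)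
  have Ssets_eq: "Ssets enum E \<mu> = insert ?e ` {P. P \<subseteq> ?away \<and> card P = 2}"
  proof (intro equalityI subsetI)
    fix X assume "X \<in> Ssets enum E \<mu>"
    hence X: "X \<subseteq> E" "card X = 3" "?e \<in> X" "\<forall>e\<in>X - {?e}. 1 \<notin> e" unfolding Ssets_def by blast+
    hence "X - {?e} \<subseteq> ?away" "card (X - {?e}) = 2" by auto
    moreover have "X = insert ?e (X - {?e})" using X(3) by blast
    ultimately show "X \<in> insert ?e ` {P. P \<subseteq> ?away \<and> card P = 2}" by blast
  next
    fix X assume "X \<in> insert ?e ` {P. P \<subseteq> ?away \<and> card P = 2}"
    then obtain P where P: "P \<subseteq> ?away" "card P = 2" "X = insert ?e P" by blast
    have "?e \<notin> P" using P(1) e(2) by blast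
    moreover have "finite P" using P(2) card.infinite by fastforce
    ultimately have "card X = 3" using P(2,3) by simp
    thus "X \<in> Ssets enum E \<mu>" unfolding Ssets_def using P e(1) by blast
  qed
  have "inj_on (insert ?e) {P. P \<subseteq> ?away \<and> card P = 2}"
  proof (rule inj_onI)
    fix P Q assume "P \<in> {P. P \<subseteq> ?away \<and> card P = 2}" "Q \<in> {P. P \<subseteq> ?away \<and> card P = 2}"
      and "insert ?e P = insert ?e Q"
    moreover have "?e \<notin> P" "?e \<notin> Q" using calculation(1,2) e(2) by blast+
    ultimately show "P = Q" by (metis insert_ident)
  qed
  hence "card (Ssets enum E \<mu>) = card {P. P \<subseteq> ?away \<and> card P = 2}"
    unfolding Ssets_eq by (rule card_image)
  also have "\<dots> = card ?away choose 2" using fin by (intro n_subsets) simp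
  finally show ?thesis using card_away by simp
qed

lemma finite_Omega:
  assumes "E \<in> RG N d"
  shows "finite (Omega enum d E)"
  unfolding Omega_def
proof (intro finite_PiE finite_cartesian_product)
  fix \<mu>
  have "Ssets enum E \<mu> \<subseteq> Pow E" unfolding Ssets_def by blast
  thus "finite (Ssets enum E \<mu>)" using finite_RG_edges[OF assms] by (meson finite_Pow_iff finite_subset)
qed simp_all

lemma Omega_nonempty: "\<forall>\<mu>\<in>{1..d}. Ssets enum E \<mu> \<noteq> {} \<Longrightarrow> Omega enum d E \<noteq> {}"
  unfolding Omega_def by (simp add: PiE_eq_empty_iff)

lemma card_Omega:
  assumes "E \<in> RG N d"
  shows "card (Omega enum d E) = (((N * d div 2 - d) choose 2) * 8) ^ d"
proof -
  have "card (Omega enum d E) = (\<Prod>\<mu>\<in>{1..d}. card (Ssets enum E \<mu> \<times> {1..(8::nat)}))"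
    unfolding Omega_def by (rule card_PiE) simp
  also have "\<dots> = (\<Prod>\<mu>\<in>{1..d}. ((N * d div 2 - d) choose 2) * 8)"
    by (rule prod.cong) (simp_all add: card_cartesian_product card_Ssets[OF assms])
  finally show ?thesis by simp
qed

end

section \<open>Undoing a switch\<close>

definition edge_at_one :: "nat set set \<Rightarrow> nat set" where
  "edge_at_one X = (THE e. e \<in> X \<and> (1::nat) \<in> e)"

definition switched_set :: "nat \<Rightarrow> (nat set set \<Rightarrow> nat \<Rightarrow> nat set set) \<Rightarrow> nat set set
    \<Rightarrow> (nat \<Rightarrow> nat set set \<times> nat) \<Rightarrow> nat \<Rightarrow> nat set set" where
  "switched_set d mt E \<omega> \<mu> =
     (if \<mu> \<in> Wset d E \<omega> then mt (fst (\<omega> \<mu>)) (snd (\<omega> \<mu>)) else fst (\<omega> \<mu>))"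

text \<open>For a switched block, the index of the old matching \<open>S\<^sub>\<mu>\<close> among the matchings disjoint from the new one.\<close>
definition switched_index :: "nat \<Rightarrow> (nat set set \<Rightarrow> nat \<Rightarrow> nat set set) \<Rightarrow> nat set set
    \<Rightarrow> (nat \<Rightarrow> nat set set \<times> nat) \<Rightarrow> nat \<Rightarrow> nat" where
  "switched_index d mt E \<omega> \<mu> =
     (if \<mu> \<in> Wset d E \<omega> then inv_into {1..8} (mt (mt (fst (\<omega> \<mu>)) (snd (\<omega> \<mu>)))) (fst (\<omega> \<mu>))
      else snd (\<omega> \<mu>))"

text \<open>The switched sets are indexed by the old edges at vertex 1, the reverse choice by the new ones:
  the \<open>\<nu>\<close>-th new edge at 1 lies in the switched set with index \<open>reindex \<nu>\<close>.\<close>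
definition reindex :: "nat \<Rightarrow> (nat set set \<Rightarrow> nat \<Rightarrow> nat set set) \<Rightarrow> (nat set set \<Rightarrow> nat \<Rightarrow> nat set)
    \<Rightarrow> nat set set \<Rightarrow> (nat \<Rightarrow> nat set set \<times> nat) \<Rightarrow> nat \<Rightarrow> nat" where
  "reindex d mt enum E \<omega> \<nu> =
     inv_into {1..d} (\<lambda>\<kappa>. edge_at_one (switched_set d mt E \<omega> \<kappa>)) (enum (switch d mt E \<omega>) \<nu>)"

definition reverse_choice :: "nat \<Rightarrow> (nat set set \<Rightarrow> nat \<Rightarrow> nat set set) \<Rightarrow> (nat set set \<Rightarrow> nat \<Rightarrow> nat set)
    \<Rightarrow> nat set set \<Rightarrow> (nat \<Rightarrow> nat set set \<times> nat) \<Rightarrow> nat \<Rightarrow> nat set set \<times> nat" where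
  "reverse_choice d mt enum E \<omega> =
     (\<lambda>\<nu>. if \<nu> \<in> {1..d}
          then (switched_set d mt E \<omega> (reindex d mt enum E \<omega> \<nu>),
                switched_index d mt E \<omega> (reindex d mt enum E \<omega> \<nu>))
          else undefined)"

definition switch_pair :: "nat \<Rightarrow> (nat set set \<Rightarrow> nat \<Rightarrow> nat set set) \<Rightarrow> (nat set set \<Rightarrow> nat \<Rightarrow> nat set)
    \<Rightarrow> nat set set \<times> (nat \<Rightarrow> nat set set \<times> nat) \<Rightarrow> nat set set \<times> (nat \<Rightarrow> nat set set \<times> nat)" where
  "switch_pair d mt enum = (\<lambda>(E, \<omega>). (switch d mt E \<omega>, reverse_choice d mt enum E \<omega>))"

locale switching_move = switching +
  fixes E :: "nat set set" and \<omega> :: "nat \<Rightarrow> nat set set \<times> nat"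
  assumes E_RG: "E \<in> RG N d" and \<omega>_Omega: "\<omega> \<in> Omega enum d E"
begin

abbreviation S where "S \<mu> \<equiv> fst (\<omega> \<mu>)"
abbreviation s where "s \<mu> \<equiv> snd (\<omega> \<mu>)"
abbreviation B where "B \<mu> \<equiv> \<Union>(S \<mu>)"
abbreviation W where "W \<equiv> Wset d E \<omega>"
abbreviation M where "M \<mu> \<equiv> mt (S \<mu>) (s \<mu>)"
abbreviation E' where "E' \<equiv> switch d mt E \<omega>"
abbreviation S' where "S' \<equiv> switched_set d mt E \<omega>"
abbreviation t' where "t' \<equiv> switched_index d mt E \<omega>"
abbreviation \<rho> where "\<rho> \<equiv> reindex d mt enum E \<omega>"
abbreviation \<omega>' where "\<omega>' \<equiv> reverse_choice d mt enum E \<omega>"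

lemma E_edge: "e \<in> E \<Longrightarrow> card e = 2 \<and> e \<subseteq> {1..N}"
  using E_RG unfolding RG_def simple_regular_def by blast

lemma degree_E: "v \<in> {1..N} \<Longrightarrow> card {e\<in>E. v \<in> e} = d"
  using E_RG unfolding RG_def simple_regular_def by blast

lemma enum_E_bij: "bij_betw (enum E) {1..d} {e\<in>E. (1::nat) \<in> e}"
  using enum_bij E_RG by blast

lemma enum_E_mem: "\<mu> \<in> {1..d} \<Longrightarrow> enum E \<mu> \<in> E \<and> 1 \<in> enum E \<mu>"
  using bij_betwE[OF enum_E_bij] by blast

lemma enum_E_inj: "\<mu> \<in> {1..d} \<Longrightarrow> \<nu> \<in> {1..d} \<Longrightarrow> enum E \<mu> = enum E \<nu> \<Longrightarrow> \<mu> = \<nu>"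
  using inj_onD[OF bij_betw_imp_inj_on[OF enum_E_bij]] by blast

lemma enum_E_surj: "e \<in> E \<Longrightarrow> 1 \<in> e \<Longrightarrow> \<exists>\<mu>\<in>{1..d}. e = enum E \<mu>"
  using bij_betw_imp_surj_on[OF enum_E_bij] by blast

lemma chosen_set:
  "\<mu> \<in> {1..d} \<Longrightarrow> S \<mu> \<subseteq> E \<and> card (S \<mu>) = 3 \<and> enum E \<mu> \<in> S \<mu> \<and>
     (\<forall>e\<in>S \<mu> - {enum E \<mu>}. 1 \<notin> e) \<and> s \<mu> \<in> {1..8}"
  using \<omega>_Omega unfolding Omega_def Ssets_def PiE_def Pi_def by (auto simp: mem_Times_iff)

lemma \<omega>_outside: "\<mu> \<notin> {1..d} \<Longrightarrow> \<omega> \<mu> = undefined"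
  using \<omega>_Omega unfolding Omega_def PiE_def extensional_def by auto

lemma chosen_edge: "\<mu> \<in> {1..d} \<Longrightarrow> e \<in> S \<mu> \<Longrightarrow> card e = 2 \<and> e \<subseteq> {1..N}"
  using chosen_set E_edge by blast

lemma edge_at_one_eq:
  assumes "e \<in> X" "1 \<in> e" "\<And>f. f \<in> X \<Longrightarrow> 1 \<in> f \<Longrightarrow> f = e"
  shows "edge_at_one X = e"
  unfolding edge_at_one_def using assms by (intro the_equality) blast+

lemma edge_at_one_chosen: "\<mu> \<in> {1..d} \<Longrightarrow> edge_at_one (S \<mu>) = enum E \<mu>"
  using chosen_set enum_E_mem by (intro edge_at_one_eq) auto

lemma one_in_block: "\<mu> \<in> {1..d} \<Longrightarrow> 1 \<in> B \<mu>"
  using chosen_set enum_E_mem by blast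

lemma W_subset: "W \<subseteq> {1..d}"
  unfolding Wset_def by auto

lemma W_induced: "\<mu> \<in> W \<Longrightarrow> card (B \<mu>) = 6 \<and> restr E (B \<mu>) = S \<mu>"
  unfolding Wset_def Iind_def by auto

lemma W_blocks_meet: "\<mu> \<in> W \<Longrightarrow> \<nu> \<in> {1..d} \<Longrightarrow> \<nu> \<noteq> \<mu> \<Longrightarrow> B \<mu> \<inter> B \<nu> = {1}"
  unfolding Wset_def Jind_def by auto

lemma W_three_edges:
  assumes "\<mu> \<in> W"
  shows "card (S \<mu>) = 3 \<and> (\<forall>e\<in>S \<mu>. card e = 2) \<and> card (B \<mu>) = 6"
proof -
  have "\<mu> \<in> {1..d}" using assms W_subset by blast
  thus ?thesis using chosen_set chosen_edge W_induced[OF assms] by blast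
qed

lemma W_perfect_matching: "\<mu> \<in> W \<Longrightarrow> perfect_matching (B \<mu>) (S \<mu>)"
  using W_three_edges by (simp add: perfect_matching_self)

lemma W_mt_bij: "\<mu> \<in> W \<Longrightarrow> bij_betw (mt (S \<mu>)) {1..8} {M. perfect_matching (B \<mu>) M \<and> S \<mu> \<inter> M = {}}"
  using W_three_edges mt_bij by simp

lemma new_matching:
  assumes "\<mu> \<in> W"
  shows "perfect_matching (B \<mu>) (M \<mu>) \<and> S \<mu> \<inter> M \<mu> = {} \<and> \<Union>(M \<mu>) = B \<mu> \<and> card (M \<mu>) = 3"
proof -
  have "s \<mu> \<in> {1..8}" using chosen_set assms W_subset by blast
  hence M: "perfect_matching (B \<mu>) (M \<mu>)" "S \<mu> \<inter> M \<mu> = {}"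
    using bij_betwE[OF W_mt_bij[OF assms]] by blast+
  have six: "card (B \<mu>) = 6" using W_induced[OF assms] by blast
  hence "finite (B \<mu>)" using card.infinite by fastforce
  hence "card (M \<mu>) = 3" using perfect_matching_card[OF M(1)] six by simp
  thus ?thesis using M perfect_matching_Union[OF M(1)] by blast
qed

lemma new_matching_edge: "\<mu> \<in> W \<Longrightarrow> f \<in> M \<mu> \<Longrightarrow> card f = 2 \<and> f \<subseteq> B \<mu>"
  using new_matching unfolding perfect_matching_def by blast

lemma new_matching_notin_E:
  assumes "\<mu> \<in> W" "f \<in> M \<mu>"
  shows "f \<notin> E"
proof
  assume "f \<in> E"
  hence "f \<in> restr E (B \<mu>)" using new_matching_edge[OF assms] unfolding restr_def by blast
  hence "f \<in> S \<mu>" using W_induced[OF assms(1)] by simp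
  thus False using new_matching[OF assms(1)] assms(2) by blast
qed

lemma block_unique:
  assumes "card f = 2" "f \<subseteq> B \<kappa>" "f \<subseteq> B \<mu>" "\<mu> \<in> W" "\<kappa> \<in> {1..d}"
  shows "\<kappa> = \<mu>"
proof (rule ccontr)
  assume "\<kappa> \<noteq> \<mu>"
  hence "f \<subseteq> {1}" using assms W_blocks_meet[of \<mu> \<kappa>] by auto
  hence "card f \<le> 1" using card_mono[of "{1}" f] by simp
  thus False using assms(1) by simp
qed

lemma block_subset: "\<mu> \<in> {1..d} \<Longrightarrow> B \<mu> \<subseteq> {1..N}"
  using chosen_edge by blast

lemma E'_eq: "E' = (E - (\<Union>\<mu>\<in>W. S \<mu>)) \<union> (\<Union>\<mu>\<in>W. M \<mu>)"
  unfolding switch_def by simp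

lemma E'_edge:
  assumes "e \<in> E'"
  shows "card e = 2 \<and> e \<subseteq> {1..N}"
proof -
  consider "e \<in> E" | \<mu> where "\<mu> \<in> W" "e \<in> M \<mu>" using assms E'_eq by auto
  thus ?thesis
  proof cases
    case 2
    thus ?thesis using new_matching_edge[OF 2] block_subset W_subset by blast
  qed (use E_edge in blast)
qed

lemma E'_in_block:
  assumes \<kappa>: "\<kappa> \<in> {1..d}" and e: "card e = 2" "e \<subseteq> B \<kappa>"
  shows "e \<in> E' \<longleftrightarrow> (if \<kappa> \<in> W then e \<in> M \<kappa> else e \<in> E)"
proof -
  have in_M: "\<mu> = \<kappa>" if "\<mu> \<in> W" "e \<in> M \<mu>" for \<mu>
    using block_unique[OF e _ that(1) \<kappa>] new_matching_edge[OF that] by blast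
  have in_S: "\<mu> = \<kappa>" if "\<mu> \<in> W" "e \<in> S \<mu>" for \<mu>
    using block_unique[OF e _ that(1) \<kappa>] that(2) by blast
  have E'_cases: "e \<in> E' \<longleftrightarrow> (e \<in> E \<and> (\<forall>\<mu>\<in>W. e \<notin> S \<mu>)) \<or> (\<exists>\<mu>\<in>W. e \<in> M \<mu>)"
    unfolding E'_eq by blast
  show ?thesis
  proof (cases "\<kappa> \<in> W")
    case True
    have "e \<in> E \<Longrightarrow> e \<in> S \<kappa>" using W_induced[OF True] e(2) unfolding restr_def by blast
    hence "e \<in> E' \<longleftrightarrow> e \<in> M \<kappa>" using E'_cases in_M True by metis
    thus ?thesis using True by simp
  next
    case False
    hence "e \<in> E' \<longleftrightarrow> e \<in> E" using E'_cases in_M in_S by metis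
    thus ?thesis using False by simp
  qed
qed

lemma restr_E'_block:
  assumes \<kappa>: "\<kappa> \<in> {1..d}"
  shows "restr E' (B \<kappa>) = (if \<kappa> \<in> W then M \<kappa> else restr E (B \<kappa>))"
proof (cases "\<kappa> \<in> W")
  case True
  have "restr E' (B \<kappa>) = M \<kappa>"
  proof (intro equalityI subsetI)
    fix e assume "e \<in> restr E' (B \<kappa>)"
    hence "e \<in> E'" "e \<subseteq> B \<kappa>" unfolding restr_def by auto
    thus "e \<in> M \<kappa>" using E'_in_block[OF \<kappa>] E'_edge True by metis
  next
    fix e assume e: "e \<in> M \<kappa>"
    hence "card e = 2" "e \<subseteq> B \<kappa>" using new_matching_edge[OF True] by auto
    thus "e \<in> restr E' (B \<kappa>)" using E'_in_block[OF \<kappa>] True e unfolding restr_def by simp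
  qed
  thus ?thesis using True by simp
next
  case False
  have "e \<in> E' \<longleftrightarrow> e \<in> E" if "e \<subseteq> B \<kappa>" for e
    using E'_in_block[OF \<kappa> _ that] E'_edge E_edge False by metis
  hence "restr E' (B \<kappa>) = restr E (B \<kappa>)" unfolding restr_def by blast
  thus ?thesis using False by simp
qed

lemma S'_eq: "S' \<mu> = (if \<mu> \<in> W then M \<mu> else S \<mu>)"
  by (simp add: switched_set_def)

lemma S'_subset_restr:
  assumes "\<kappa> \<in> {1..d}"
  shows "S' \<kappa> \<subseteq> restr E' (B \<kappa>)"
proof (cases "\<kappa> \<in> W")
  case False
  have "S \<kappa> \<subseteq> restr E (B \<kappa>)" using chosen_set[OF assms] unfolding restr_def by blast
  thus ?thesis using False restr_E'_block[OF assms] S'_eq by simp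
qed (simp add: restr_E'_block[OF assms] S'_eq)

lemma S'_subset_E': "\<kappa> \<in> {1..d} \<Longrightarrow> S' \<kappa> \<subseteq> E'"
  using S'_subset_restr unfolding restr_def by blast

lemma Union_S': "\<Union>(S' \<kappa>) = B \<kappa>"
  using new_matching S'_eq by (cases "\<kappa> \<in> W") simp_all

lemma S'_card:
  assumes "\<kappa> \<in> {1..d}"
  shows "card (S' \<kappa>) = 3 \<and> (\<forall>e\<in>S' \<kappa>. card e = 2)"
proof -
  have "card (S' \<kappa>) = 3" using new_matching chosen_set[OF assms] S'_eq by (cases "\<kappa> \<in> W") simp_all
  moreover have "\<forall>e\<in>S' \<kappa>. card e = 2" using S'_subset_E'[OF assms] E'_edge by blast
  ultimately show ?thesis by blast
qed

lemma S'_edge_at_one: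
  assumes \<kappa>: "\<kappa> \<in> {1..d}"
  shows "edge_at_one (S' \<kappa>) \<in> S' \<kappa> \<and> 1 \<in> edge_at_one (S' \<kappa>) \<and>
    (\<forall>e\<in>S' \<kappa>. 1 \<in> e \<longrightarrow> e = edge_at_one (S' \<kappa>))"
proof -
  have "\<exists>e0. e0 \<in> S' \<kappa> \<and> 1 \<in> e0 \<and> (\<forall>e\<in>S' \<kappa>. 1 \<in> e \<longrightarrow> e = e0)"
  proof (cases "\<kappa> \<in> W")
    case True
    have "1 \<in> \<Union>(M \<kappa>)" using one_in_block[OF \<kappa>] new_matching[OF True] by simp
    then obtain e0 where e0: "e0 \<in> M \<kappa>" "1 \<in> e0" by blast
    moreover have "\<forall>e\<in>M \<kappa>. 1 \<in> e \<longrightarrow> e = e0"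
      using perfect_matching_unique[of "B \<kappa>" "M \<kappa>" _ e0 1] new_matching[OF True] e0 by blast
    moreover have "S' \<kappa> = M \<kappa>" using True S'_eq by simp
    ultimately show ?thesis by blast
  next
    case False
    have "enum E \<kappa> \<in> S \<kappa>" "1 \<in> enum E \<kappa>" "\<forall>e\<in>S \<kappa>. 1 \<in> e \<longrightarrow> e = enum E \<kappa>"
      using chosen_set[OF \<kappa>] enum_E_mem[OF \<kappa>] by blast+
    moreover have "S' \<kappa> = S \<kappa>" using False S'_eq by simp
    ultimately show ?thesis by blast
  qed
  then obtain e0 where e0: "e0 \<in> S' \<kappa>" "1 \<in> e0" "\<forall>e\<in>S' \<kappa>. 1 \<in> e \<longrightarrow> e = e0" by blast
  moreover have "edge_at_one (S' \<kappa>) = e0" using e0 by (intro edge_at_one_eq) blast+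
  ultimately show ?thesis by blast
qed

lemma edge_at_one_S'_unswitched: "\<kappa> \<in> {1..d} \<Longrightarrow> \<kappa> \<notin> W \<Longrightarrow> edge_at_one (S' \<kappa>) = enum E \<kappa>"
  using edge_at_one_chosen S'_eq by simp

lemma edge_at_one_S'_inj: "inj_on (\<lambda>\<kappa>. edge_at_one (S' \<kappa>)) {1..d}"
proof (rule inj_onI, rule ccontr)
  fix x y assume x: "x \<in> {1..d}" and y: "y \<in> {1..d}" and eq: "edge_at_one (S' x) = edge_at_one (S' y)"
    and ne: "x \<noteq> y"
  let ?f = "edge_at_one (S' x)"
  have in_x: "?f \<in> S' x" using S'_edge_at_one[OF x] by blast
  moreover have in_y: "?f \<in> S' y" using S'_edge_at_one[OF y] eq by simp
  ultimately have f: "card ?f = 2" "?f \<subseteq> B x" "?f \<subseteq> B y"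
    using S'_card[OF x] Union_upper[OF in_x] Union_upper[OF in_y] by (simp_all add: Union_S')
  have "x \<notin> W" using block_unique[OF f(1,3,2) _ y] ne by blast
  moreover have "y \<notin> W" using block_unique[OF f(1,2,3) _ x] ne by blast
  ultimately have "enum E x = enum E y" using eq edge_at_one_S'_unswitched x y by simp
  thus False using enum_E_inj x y ne by blast
qed

lemma edge_at_one_S'_image: "(\<lambda>\<kappa>. edge_at_one (S' \<kappa>)) ` {1..d} = {e\<in>E'. 1 \<in> e}"
proof (intro equalityI subsetI)
  fix e assume "e \<in> (\<lambda>\<kappa>. edge_at_one (S' \<kappa>)) ` {1..d}"
  thus "e \<in> {e\<in>E'. 1 \<in> e}" using S'_edge_at_one S'_subset_E' by blast
next
  fix e assume "e \<in> {e\<in>E'. 1 \<in> e}"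
  hence one: "1 \<in> e" and "e \<in> E'" by auto
  then consider "e \<in> E" "e \<notin> (\<Union>\<mu>\<in>W. S \<mu>)" | \<mu> where "\<mu> \<in> W" "e \<in> M \<mu>"
    using E'_eq by auto
  thus "e \<in> (\<lambda>\<kappa>. edge_at_one (S' \<kappa>)) ` {1..d}"
  proof cases
    case 1
    then obtain \<kappa> where \<kappa>: "\<kappa> \<in> {1..d}" "e = enum E \<kappa>" using enum_E_surj one by blast
    hence "\<kappa> \<notin> W" using 1 chosen_set by blast
    hence "edge_at_one (S' \<kappa>) = e" using edge_at_one_S'_unswitched[OF \<kappa>(1)] \<kappa>(2) by simp
    thus ?thesis using \<kappa>(1) by (metis rev_image_eqI)
  next
    case 2
    hence "e \<in> S' \<mu>" "\<mu> \<in> {1..d}" using S'_eq W_subset by auto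
    hence "e = edge_at_one (S' \<mu>)" using S'_edge_at_one one by blast
    thus ?thesis using \<open>\<mu> \<in> {1..d}\<close> by blast
  qed
qed

lemma edge_at_one_S'_bij: "bij_betw (\<lambda>\<kappa>. edge_at_one (S' \<kappa>)) {1..d} {e\<in>E'. (1::nat) \<in> e}"
  unfolding bij_betw_def using edge_at_one_S'_inj edge_at_one_S'_image by blast

lemma edges_at_switched_vertex:
  assumes \<mu>: "\<mu> \<in> W" and v: "v \<in> B \<mu>" "v \<noteq> 1"
    and a: "a \<in> S \<mu>" "v \<in> a" and b: "b \<in> M \<mu>" "v \<in> b"
  shows "{e\<in>E'. v \<in> e} = insert b ({e\<in>E. v \<in> e} - {a})"
proof (intro equalityI subsetI)
  have only: "\<And>\<kappa>. \<kappa> \<in> W \<Longrightarrow> v \<in> B \<kappa> \<Longrightarrow> \<kappa> = \<mu>"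
    using W_blocks_meet[OF \<mu>] v W_subset by blast
  {
    fix e assume "e \<in> {e\<in>E'. v \<in> e}"
    hence e: "e \<in> E'" "v \<in> e" by auto
    then consider "e \<in> E" "e \<notin> (\<Union>\<mu>\<in>W. S \<mu>)" | \<kappa> where "\<kappa> \<in> W" "e \<in> M \<kappa>"
      using E'_eq by auto
    thus "e \<in> insert b ({e\<in>E. v \<in> e} - {a})"
    proof cases
      case 1 thus ?thesis using a \<mu> e by auto
    next
      case 2
      hence "\<kappa> = \<mu>" using only new_matching_edge e by blast
      hence "e = b" using perfect_matching_unique[of "B \<mu>" "M \<mu>" e b v] new_matching[OF \<mu>] 2 b e by blast
      thus ?thesis by simp
    qed
  }
  {
    fix e assume "e \<in> insert b ({e\<in>E. v \<in> e} - {a})"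
    then consider "e = b" | "e \<in> E" "v \<in> e" "e \<noteq> a" by auto
    thus "e \<in> {e\<in>E'. v \<in> e}"
    proof cases
      case 1 thus ?thesis using b \<mu> E'_eq by auto
    next
      case 2
      have "e \<notin> S \<kappa>" if "\<kappa> \<in> W" for \<kappa>
      proof
        assume "e \<in> S \<kappa>"
        hence "\<kappa> = \<mu>" using only that 2 by blast
        thus False using perfect_matching_unique[OF W_perfect_matching[OF \<mu>], of e a v] \<open>e \<in> S \<kappa>\<close> a 2 by blast
      qed
      thus ?thesis using 2 E'_eq by auto
    qed
  }
qed

lemma degree_E'_switched:
  assumes \<mu>: "\<mu> \<in> W" and v: "v \<in> B \<mu>" "v \<noteq> 1"
  shows "card {e\<in>E'. v \<in> e} = d"
proof -
  have \<mu>': "\<mu> \<in> {1..d}" using \<mu> W_subset by blast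
  obtain a where a: "a \<in> S \<mu>" "v \<in> a" using v by blast
  have "v \<in> \<Union>(M \<mu>)" using new_matching[OF \<mu>] v by simp
  then obtain b where b: "b \<in> M \<mu>" "v \<in> b" by blast
  have "v \<in> {1..N}" using block_subset[OF \<mu>'] v by blast
  hence deg: "card {e\<in>E. v \<in> e} = d" by (rule degree_E)
  have fin: "finite {e\<in>E. v \<in> e}" using finite_RG_edges[OF E_RG] by simp
  have a_in: "a \<in> {e\<in>E. v \<in> e}" using a chosen_set[OF \<mu>'] by blast
  have "b \<notin> {e\<in>E. v \<in> e} - {a}" using new_matching_notin_E[OF \<mu> b(1)] by blast
  hence "card {e\<in>E'. v \<in> e} = Suc (card ({e\<in>E. v \<in> e} - {a}))"
    unfolding edges_at_switched_vertex[OF \<mu> v a b] using fin by simp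
  also have "\<dots> = d"
  proof -
    have "card {e\<in>E. v \<in> e} > 0" using a_in fin card_gt_0_iff by blast
    thus ?thesis using card_Diff_singleton[OF a_in] deg by simp
  qed
  finally show ?thesis .
qed

lemma edges_at_unswitched_vertex:
  assumes "\<forall>\<mu>\<in>W. v \<notin> B \<mu>"
  shows "{e\<in>E'. v \<in> e} = {e\<in>E. v \<in> e}"
proof -
  have "e \<notin> M \<mu>" "e \<notin> S \<mu>" if "\<mu> \<in> W" "v \<in> e" for e \<mu>
    using assms that new_matching_edge by blast+
  thus ?thesis using E'_eq by blast
qed

lemma degree_E': "v \<in> {1..N} \<Longrightarrow> card {e\<in>E'. v \<in> e} = d"
proof -
  assume v: "v \<in> {1..N}"
  consider "v = 1" | \<mu> where "\<mu> \<in> W" "v \<in> B \<mu>" "v \<noteq> 1" | "\<forall>\<mu>\<in>W. v \<notin> B \<mu>" by blast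
  thus ?thesis
  proof cases
    case 1
    thus ?thesis using bij_betw_same_card[OF edge_at_one_S'_bij] by simp
  next
    case 2
    thus ?thesis by (rule degree_E'_switched)
  next
    case 3
    thus ?thesis using edges_at_unswitched_vertex degree_E[OF v] by simp
  qed
qed

lemma E'_RG: "E' \<in> RG N d"
  unfolding RG_def simple_regular_def using E'_edge degree_E' by auto

lemma enum_E'_bij: "bij_betw (enum E') {1..d} {e\<in>E'. (1::nat) \<in> e}"
  using enum_bij E'_RG by blast

lemma reindex_bij: "bij_betw \<rho> {1..d} {1..d}"
proof -
  have "\<rho> = inv_into {1..d} (\<lambda>\<kappa>. edge_at_one (S' \<kappa>)) \<circ> enum E'"
    by (rule ext) (simp add: reindex_def)
  thus ?thesis using bij_betw_trans[OF enum_E'_bij bij_betw_inv_into[OF edge_at_one_S'_bij]] by simp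
qed

lemma reindex_mem: "\<nu> \<in> {1..d} \<Longrightarrow> \<rho> \<nu> \<in> {1..d}"
  using bij_betwE[OF reindex_bij] by blast

lemma reindex_inj: "\<nu> \<in> {1..d} \<Longrightarrow> \<nu>' \<in> {1..d} \<Longrightarrow> \<rho> \<nu> = \<rho> \<nu>' \<Longrightarrow> \<nu> = \<nu>'"
  using inj_onD[OF bij_betw_imp_inj_on[OF reindex_bij]] by blast

lemma reindex_surj: "\<kappa> \<in> {1..d} \<Longrightarrow> \<exists>\<nu>\<in>{1..d}. \<rho> \<nu> = \<kappa>"
  using bij_betw_imp_surj_on[OF reindex_bij] by (metis imageE)

lemma edge_at_one_S'_reindex:
  assumes "\<nu> \<in> {1..d}"
  shows "edge_at_one (S' (\<rho> \<nu>)) = enum E' \<nu>"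
proof -
  have "enum E' \<nu> \<in> (\<lambda>\<kappa>. edge_at_one (S' \<kappa>)) ` {1..d}"
    using bij_betwE[OF enum_E'_bij] assms edge_at_one_S'_image by blast
  thus ?thesis unfolding reindex_def by (rule f_inv_into_f)
qed

lemma t'_eq: "t' \<mu> = (if \<mu> \<in> W then inv_into {1..8} (mt (M \<mu>)) (S \<mu>) else s \<mu>)"
  by (simp add: switched_index_def)

lemma switched_index_undoes:
  assumes \<mu>: "\<mu> \<in> W"
  shows "t' \<mu> \<in> {1..8} \<and> mt (M \<mu>) (t' \<mu>) = S \<mu>"
proof -
  have "card (M \<mu>) = 3 \<and> (\<forall>e\<in>M \<mu>. card e = 2) \<and> card (\<Union>(M \<mu>)) = 6"
    using new_matching[OF \<mu>] new_matching_edge[OF \<mu>] W_induced[OF \<mu>] by simp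
  hence "bij_betw (mt (M \<mu>)) {1..8} {X. perfect_matching (\<Union>(M \<mu>)) X \<and> M \<mu> \<inter> X = {}}"
    using mt_bij by blast
  moreover have "S \<mu> \<in> {X. perfect_matching (\<Union>(M \<mu>)) X \<and> M \<mu> \<inter> X = {}}"
    using W_perfect_matching[OF \<mu>] new_matching[OF \<mu>] by auto
  ultimately have S: "S \<mu> \<in> mt (M \<mu>) ` {1..8}" by (simp add: bij_betw_def)
  have "t' \<mu> = inv_into {1..8} (mt (M \<mu>)) (S \<mu>)" using \<mu> t'_eq by simp
  thus ?thesis using inv_into_into[OF S] f_inv_into_f[OF S] by simp
qed

lemma switched_index_mem: "\<mu> \<in> {1..d} \<Longrightarrow> t' \<mu> \<in> {1..8}"
  using switched_index_undoes chosen_set t'_eq by (cases "\<mu> \<in> W") auto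

lemma S'_reindex_Ssets:
  assumes \<nu>: "\<nu> \<in> {1..d}"
  shows "S' (\<rho> \<nu>) \<in> Ssets enum E' \<nu>"
proof -
  have \<kappa>: "\<rho> \<nu> \<in> {1..d}" using reindex_mem[OF \<nu>] .
  have at_one: "enum E' \<nu> \<in> S' (\<rho> \<nu>)" "\<forall>e\<in>S' (\<rho> \<nu>). 1 \<in> e \<longrightarrow> e = enum E' \<nu>"
    using S'_edge_at_one[OF \<kappa>] edge_at_one_S'_reindex[OF \<nu>] by auto
  thus ?thesis unfolding Ssets_def using S'_subset_E'[OF \<kappa>] S'_card[OF \<kappa>] by blast
qed

lemma reverse_choice_at: "\<nu> \<in> {1..d} \<Longrightarrow> \<omega>' \<nu> = (S' (\<rho> \<nu>), t' (\<rho> \<nu>))"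
  by (simp add: reverse_choice_def)

lemma reverse_choice_Omega: "\<omega>' \<in> Omega enum d E'"
  unfolding Omega_def
proof (rule PiE_I)
  fix \<nu> assume "\<nu> \<in> {1..d}"
  thus "\<omega>' \<nu> \<in> Ssets enum E' \<nu> \<times> {1..8}"
    using reverse_choice_at S'_reindex_Ssets switched_index_mem[OF reindex_mem] by simp
qed (auto simp: reverse_choice_def)

lemma Iind_S'_iff:
  assumes \<mu>: "\<mu> \<in> {1..d}"
  shows "Iind E' (S' \<mu>) \<and> Jind d S \<mu> \<longleftrightarrow> \<mu> \<in> W"
proof (cases "\<mu> \<in> W")
  case True
  have "card (\<Union>(M \<mu>)) = 6" "restr E' (\<Union>(M \<mu>)) = M \<mu>"
    using new_matching[OF True] W_induced[OF True] restr_E'_block[OF \<mu>] True by simp_all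
  hence "Iind E' (S' \<mu>)" using True S'_eq unfolding Iind_def by simp
  thus ?thesis using True unfolding Wset_def by blast
next
  case False
  have "Iind E' (S' \<mu>) \<longleftrightarrow> Iind E (S \<mu>)"
    using False S'_eq restr_E'_block[OF \<mu>] unfolding Iind_def by simp
  thus ?thesis using False \<mu> unfolding Wset_def by blast
qed

lemma Jind_reverse_choice:
  assumes \<nu>: "\<nu> \<in> {1..d}"
  shows "Jind d (\<lambda>\<nu>. fst (\<omega>' \<nu>)) \<nu> \<longleftrightarrow> Jind d S (\<rho> \<nu>)"
proof -
  have reindexed: "(\<forall>\<nu>'\<in>{1..d}. \<nu>' \<noteq> \<nu> \<longrightarrow> P (\<rho> \<nu>')) \<longleftrightarrow> (\<forall>\<kappa>\<in>{1..d}. \<kappa> \<noteq> \<rho> \<nu> \<longrightarrow> P \<kappa>)" for P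
    using reindex_inj[OF _ \<nu>] reindex_surj reindex_mem by metis
  have "\<And>x. x \<in> {1..d} \<Longrightarrow> \<Union>(fst (\<omega>' x)) = B (\<rho> x)"
    using reverse_choice_at Union_S' by simp
  hence "Jind d (\<lambda>\<nu>. fst (\<omega>' \<nu>)) \<nu> \<longleftrightarrow> (\<forall>\<nu>'\<in>{1..d}. \<nu>' \<noteq> \<nu> \<longrightarrow> B (\<rho> \<nu>) \<inter> B (\<rho> \<nu>') = {1})"
    unfolding Jind_def using \<nu> by simp
  also have "\<dots> \<longleftrightarrow> Jind d S (\<rho> \<nu>)"
    unfolding Jind_def by (rule reindexed)
  finally show ?thesis .
qed

lemma Wset_reverse_choice: "Wset d E' \<omega>' = {\<nu>\<in>{1..d}. \<rho> \<nu> \<in> W}"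
proof -
  have "Iind E' (fst (\<omega>' \<nu>)) \<and> Jind d (\<lambda>\<nu>. fst (\<omega>' \<nu>)) \<nu> \<longleftrightarrow> \<rho> \<nu> \<in> W" if "\<nu> \<in> {1..d}" for \<nu>
    using reverse_choice_at[OF that] Jind_reverse_choice[OF that] Iind_S'_iff[OF reindex_mem[OF that]] by simp
  thus ?thesis unfolding Wset_def by blast
qed

lemma reindex_Wset: "\<rho> ` Wset d E' \<omega>' = W"
proof
  show "\<rho> ` Wset d E' \<omega>' \<subseteq> W" using Wset_reverse_choice by blast
  show "W \<subseteq> \<rho> ` Wset d E' \<omega>'"
  proof
    fix \<mu> assume \<mu>: "\<mu> \<in> W"
    then obtain \<nu> where "\<nu> \<in> {1..d}" "\<rho> \<nu> = \<mu>" using reindex_surj W_subset by blast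
    thus "\<mu> \<in> \<rho> ` Wset d E' \<omega>'" using Wset_reverse_choice \<mu> by blast
  qed
qed

lemma switched_set_back:
  assumes \<nu>: "\<nu> \<in> {1..d}"
  shows "switched_set d mt E' \<omega>' \<nu> = S (\<rho> \<nu>)"
proof (cases "\<rho> \<nu> \<in> W")
  case True
  hence "\<nu> \<in> Wset d E' \<omega>'" using Wset_reverse_choice \<nu> by blast
  hence "switched_set d mt E' \<omega>' \<nu> = mt (M (\<rho> \<nu>)) (t' (\<rho> \<nu>))"
    unfolding switched_set_def[of d mt E' \<omega>'] using reverse_choice_at[OF \<nu>] S'_eq True by simp
  thus ?thesis using switched_index_undoes[OF True] by simp
next
  case False
  hence "\<nu> \<notin> Wset d E' \<omega>'" using Wset_reverse_choice by blast
  thus ?thesis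
    unfolding switched_set_def[of d mt E' \<omega>'] using reverse_choice_at[OF \<nu>] S'_eq False by simp
qed

lemma switched_index_back:
  assumes \<nu>: "\<nu> \<in> {1..d}"
  shows "switched_index d mt E' \<omega>' \<nu> = s (\<rho> \<nu>)"
proof (cases "\<rho> \<nu> \<in> W")
  case True
  hence "\<nu> \<in> Wset d E' \<omega>'" using Wset_reverse_choice \<nu> by blast
  hence "switched_index d mt E' \<omega>' \<nu> = inv_into {1..8} (mt (S (\<rho> \<nu>))) (M (\<rho> \<nu>))"
    unfolding switched_index_def[of d mt E' \<omega>']
    using reverse_choice_at[OF \<nu>] S'_eq switched_index_undoes[OF True] True by simp
  also have "\<dots> = s (\<rho> \<nu>)"
    using inv_into_f_f[OF bij_betw_imp_inj_on[OF W_mt_bij[OF True]]] chosen_set[OF reindex_mem[OF \<nu>]]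
    by blast
  finally show ?thesis .
next
  case False
  hence "\<nu> \<notin> Wset d E' \<omega>'" using Wset_reverse_choice by blast
  thus ?thesis
    unfolding switched_index_def[of d mt E' \<omega>'] using reverse_choice_at[OF \<nu>] False t'_eq by simp
qed

lemma switch_back: "switch d mt E' \<omega>' = E"
proof -
  let ?W' = "Wset d E' \<omega>'"
  have W': "?W' \<subseteq> {1..d}" "\<And>\<nu>. \<nu> \<in> ?W' \<Longrightarrow> \<rho> \<nu> \<in> W" using Wset_reverse_choice by blast+
  have "(\<Union>\<nu>\<in>?W'. fst (\<omega>' \<nu>)) = (\<Union>\<nu>\<in>?W'. M (\<rho> \<nu>))"
    using W' reverse_choice_at S'_eq by (intro SUP_cong) auto
  also have "\<dots> = (\<Union>\<mu>\<in>\<rho> ` ?W'. M \<mu>)" by (simp add: image_image)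
  also have "\<dots> = (\<Union>\<mu>\<in>W. M \<mu>)" by (simp only: reindex_Wset)
  finally have removed: "(\<Union>\<nu>\<in>?W'. fst (\<omega>' \<nu>)) = (\<Union>\<mu>\<in>W. M \<mu>)" .
  have "mt (fst (\<omega>' \<nu>)) (snd (\<omega>' \<nu>)) = S (\<rho> \<nu>)" if "\<nu> \<in> ?W'" for \<nu>
    using switched_set_back[of \<nu>] W'(1) that unfolding switched_set_def[of d mt E' \<omega>'] by auto
  hence "(\<Union>\<nu>\<in>?W'. mt (fst (\<omega>' \<nu>)) (snd (\<omega>' \<nu>))) = (\<Union>\<nu>\<in>?W'. S (\<rho> \<nu>))" by simp
  also have "\<dots> = (\<Union>\<mu>\<in>\<rho> ` ?W'. S \<mu>)" by (simp add: image_image)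
  also have "\<dots> = (\<Union>\<mu>\<in>W. S \<mu>)" by (simp only: reindex_Wset)
  finally have added: "(\<Union>\<nu>\<in>?W'. mt (fst (\<omega>' \<nu>)) (snd (\<omega>' \<nu>))) = (\<Union>\<mu>\<in>W. S \<mu>)" .
  have old: "(\<Union>\<mu>\<in>W. S \<mu>) \<subseteq> E" using chosen_set W_subset by blast
  have new: "(\<Union>\<mu>\<in>W. M \<mu>) \<inter> E = {}" using new_matching_notin_E by blast
  have "switch d mt E' \<omega>' = (E' - (\<Union>\<mu>\<in>W. M \<mu>)) \<union> (\<Union>\<mu>\<in>W. S \<mu>)"
    unfolding switch_def[of d mt E' \<omega>'] removed added ..
  also have "\<dots> = E" unfolding E'_eq using old new by blast
  finally show ?thesis .
qed

lemma reverse_choice_back: "reverse_choice d mt enum E' \<omega>' = \<omega>"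
proof
  fix l
  show "reverse_choice d mt enum E' \<omega>' l = \<omega> l"
  proof (cases "l \<in> {1..d}")
    case False
    thus ?thesis using \<omega>_outside[OF False] unfolding reverse_choice_def[of d mt enum E' \<omega>'] by auto
  next
    case True
    let ?g = "\<lambda>\<kappa>. edge_at_one (switched_set d mt E' \<omega>' \<kappa>)"
    let ?r = "reindex d mt enum E' \<omega>' l"
    have g: "\<And>\<kappa>. \<kappa> \<in> {1..d} \<Longrightarrow> ?g \<kappa> = enum E (\<rho> \<kappa>)"
      using switched_set_back edge_at_one_chosen reindex_mem by simp
    obtain k where k: "k \<in> {1..d}" "\<rho> k = l" using reindex_surj[OF True] by blast
    have im: "enum E l \<in> ?g ` {1..d}" using g[OF k(1)] k by force
    have r: "?r = inv_into {1..d} ?g (enum E l)" unfolding reindex_def switch_back ..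
    have r_mem: "?r \<in> {1..d}" using inv_into_into[OF im] r by simp
    have "enum E (\<rho> ?r) = enum E l" using f_inv_into_f[OF im] r g[OF r_mem] by simp
    hence \<rho>r: "\<rho> ?r = l" using enum_E_inj reindex_mem[OF r_mem] True by blast
    have "reverse_choice d mt enum E' \<omega>' l = (switched_set d mt E' \<omega>' ?r, switched_index d mt E' \<omega>' ?r)"
      using True unfolding reverse_choice_def[of d mt enum E' \<omega>'] by simp
    thus ?thesis using switched_set_back[OF r_mem] switched_index_back[OF r_mem] \<rho>r by simp
  qed
qed

end

lemma fst_switch_pair: "fst (switch_pair d mt enum (E, \<omega>)) = switch d mt E \<omega>"
  by (simp add: switch_pair_def)

context switching
begin

lemma switch_pair_involution:
  assumes "p \<in> Sigma (RG N d) (Omega enum d)"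
  shows "switch_pair d mt enum p \<in> Sigma (RG N d) (Omega enum d) \<and>
    switch_pair d mt enum (switch_pair d mt enum p) = p"
proof -
  obtain E \<omega> where p: "p = (E, \<omega>)" "E \<in> RG N d" "\<omega> \<in> Omega enum d E" using assms by blast
  interpret switching_move N d enum mt E \<omega>
    using p by (intro switching_move.intro switching_axioms switching_move_axioms.intro)
  show ?thesis
    using p E'_RG reverse_choice_Omega switch_back reverse_choice_back by (simp add: switch_pair_def)
qed

lemma switch_pair_bij:
  "bij_betw (switch_pair d mt enum) (Sigma (RG N d) (Omega enum d)) (Sigma (RG N d) (Omega enum d))"
  using switch_pair_involution by (intro bij_betw_byWitness[where f' = "switch_pair d mt enum"]; blast)

end

theorem lemma6p1:
  fixes N d :: nat
    and enum :: "nat set set \<Rightarrow> nat \<Rightarrow> nat set"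
    and mt :: "nat set set \<Rightarrow> nat \<Rightarrow> nat set set"
  assumes nonempty: "RG N d \<noteq> {}"
    and enum_bij: "\<forall>E\<in>RG N d. bij_betw (enum E) {1..d} {e\<in>E. (1::nat) \<in> e}"
    and mt_bij: "\<forall>S::nat set set. card S = 3 \<and> (\<forall>e\<in>S. card e = 2) \<and> card (\<Union>S) = 6 \<longrightarrow>
                   bij_betw (mt S) {1..8} {M. perfect_matching (\<Union>S) M \<and> S \<inter> M = {}}"
    and S_nonempty: "\<forall>E\<in>RG N d. \<forall>\<mu>\<in>{1..d}. Ssets enum E \<mu> \<noteq> {}"
  shows "bind_pmf (pmf_of_set (RG N d))
           (\<lambda>E. map_pmf (switch d mt E) (pmf_of_set (Omega enum d E)))
         = pmf_of_set (RG N d)"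
proof -
  interpret switching N d enum mt using enum_bij mt_bij by unfold_locales
  have "finite (Omega enum d E) \<and> Omega enum d E \<noteq> {} \<and>
      card (Omega enum d E) = (((N * d div 2 - d) choose 2) * 8) ^ d" if "E \<in> RG N d" for E
    using finite_Omega[OF that] Omega_nonempty S_nonempty that card_Omega[OF that] by blast
  thus ?thesis
    by (rule bind_pmf_of_set_stationary[OF finite_RG nonempty _ switch_pair_bij])
       (simp_all add: fst_switch_pair)
qed

end
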